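(* Let $G$ be an $(n,n,p_s,p_d)$-two-island network with groups $V_1,V_2$ and degree of homophily $h_G=p_s/p_d$, and let the dual opinions evolve according to the dynamics in the context with common resilience $\phi\in(0,1)$, common bias parameter $b$ satisfying $\frac{2}{\phi(h_G-1)+2}<b<1$, and the symmetric initial condition $x_i(0)=x_0\in(\tfrac12,1)$, $y_i(0)=y_0\in[\tfrac12,x_0]$ for $i\in V_1$ and $x_j(0)=1-x_0$, $y_j(0)=1-y_0$ for $j\in V_2$. Then for every $i\in V_1$ there exists $\tau>0$ such that $x_i(t)$ and $y_i(t)$ are monotonic for $t>\tau$, and $$\lim_{t\to\infty}x_i(t)=\hat x(\phi,h_G,b),\qquad \lim_{t\to\infty}y_i(t)=\frac{\phi(h_G+1)\hat x(\phi,h_G,b)+1-\phi}{\phi h_G+2-\phi}.$$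
   Context: Let $n\ge 1$ and $p_s,p_d\in(0,1)$ with $p_s>p_d$ and $np_s,np_d$ positive integers. An $(n,n,p_s,p_d)$-two-island network is an undirected graph (no self-loops) with vertex set $V=V_1\cup V_2$, $V_1\cap V_2=\emptyset$, $|V_1|=|V_2|=n$, such that each node of $V_1$ has exactly $np_s$ neighbours in $V_1$ and $np_d$ neighbours in $V_2$, and each node of $V_2$ has exactly $np_s$ neighbours in $V_2$ and $np_d$ neighbours in $V_1$. Its degree of homophily is $h_G=p_s/p_d>1$. Let $w_{ij}\in\{0,1\}$ be the adjacency matrix, $N_i$ the set of neighbours of $i$, and $d_i=\sum_{j\in N_i}w_{ij}$. Dual opinions dynamics: each individual $i\in V$ has an implicit opinion $x_i(t)\in[0,1]$ and an explicit opinion $y_i(t)\in[0,1]$, $t=0,1,2,\dots$, updated by $$x_i(t+1)=\frac{x_i(t)^{b}s_i(t)}{x_i(t)^{b}s_i(t)+(1-x_i(t))^{b}(d_i-s_i(t))},\qquad y_i(t+1)=\phi\, x_i(t+1)+(1-\phi)\hat y_{i,avg}(t),$$ where $s_i(t)=\sum_{j\in N_i}w_{ij}y_j(t)$ and $\hat y_{i,avg}(t)=\sum_{j\in N_i}\frac{w_{ij}}{d_i}y_j(t)$. For $0<b<1$ define $g(x,b)=\frac{x^{1-b}-(1-x)^{1-b}}{x(1-x)^{1-b}-(1-x)x^{1-b}}$ for $x\in(\tfrac12,1)$ and $g(\tfrac12,b)=\frac2b-2$. When $\frac{2}{\phi(h_G-1)+2}<b<1$, $\hat x(\phi,h_G,b)$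 denotes the unique solution $x\in(\tfrac12,1)$ of $g(x,b)=\phi(h_G-1)$. *)

theory Defs
  imports "HOL-Analysis.Analysis"
begin

definition nbrs :: "('a \<Rightarrow> 'a \<Rightarrow> bool) \<Rightarrow> 'a set \<Rightarrow> 'a \<Rightarrow> 'a set" where
  "nbrs E V i = {j \<in> V. E i j}"

definition two_island ::
  "('a \<Rightarrow> 'a \<Rightarrow> bool) \<Rightarrow> 'a set \<Rightarrow> 'a set \<Rightarrow> nat \<Rightarrow> real \<Rightarrow> real \<Rightarrow> bool" where
  "two_island E V1 V2 n ps pd \<longleftrightarrow>
     n \<ge> 1 \<and> 0 < pd \<and> pd < ps \<and> ps < 1 \<and>
     (\<exists>k::nat. k > 0 \<and> real n * ps = real k) \<and>
     (\<exists>k::nat. k > 0 \<and> real n * pd = real k) \<and>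
     finite V1 \<and> finite V2 \<and> V1 \<inter> V2 = {} \<and> card V1 = n \<and> card V2 = n \<and>
     (\<forall>i j. E i j \<longrightarrow> E j i) \<and> (\<forall>i. \<not> E i i) \<and>
     (\<forall>i j. E i j \<longrightarrow> i \<in> V1 \<union> V2 \<and> j \<in> V1 \<union> V2) \<and>
     (\<forall>i\<in>V1. real (card (nbrs E V1 i)) = real n * ps \<and>
               real (card (nbrs E V2 i)) = real n * pd) \<and>
     (\<forall>i\<in>V2. real (card (nbrs E V2 i)) = real n * ps \<and>
               real (card (nbrs E V1 i)) = real n * pd)"

text \<open>Dual opinions dynamics on vertex set V (adjacency weights w_ij in {0,1}).\<close>

definition dual_opinion_dynamics ::
  "('a \<Rightarrow> 'a \<Rightarrow> bool) \<Rightarrow> 'a set \<Rightarrow> real \<Rightarrow> real \<Rightarrow>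
   (nat \<Rightarrow> 'a \<Rightarrow> real) \<Rightarrow> (nat \<Rightarrow> 'a \<Rightarrow> real) \<Rightarrow> bool" where
  "dual_opinion_dynamics E V b \<phi> x y \<longleftrightarrow>
     (\<forall>t. \<forall>i\<in>V.
        let N = nbrs E V i;
            d = real (card N);
            s = (\<Sum>j\<in>N. y t j)
        in x (Suc t) i = (x t i powr b * s) /
                           (x t i powr b * s + (1 - x t i) powr b * (d - s)) \<and>
           y (Suc t) i = \<phi> * x (Suc t) i + (1 - \<phi>) * (s / d))"

definition g_fun :: "real \<Rightarrow> real \<Rightarrow> real" where
  "g_fun x b = (if x = 1/2 then 2 / b - 2
     else (x powr (1 - b) - (1 - x) powr (1 - b)) /
          (x * (1 - x) powr (1 - b) - (1 - x) * x powr (1 - b)))"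

definition x_hat :: "real \<Rightarrow> real \<Rightarrow> real \<Rightarrow> real" where
  "x_hat \<phi> h b = (THE x. 1/2 < x \<and> x < 1 \<and> g_fun x b = \<phi> * (h - 1))"

end

theory Submission
  imports Defs
begin

(*
  On the two-island network the symmetric initial state is preserved: every node of V1 carries
  the same pair (X t, Y t) and every node of V2 the pair (1 - X t, 1 - Y t), where
    X (t+1) = F_b (X t, m (Y t)),   Y (t+1) = phi X (t+1) + (1 - phi) m (Y t),
  F_b is the biased update and m y = (h y + 1 - y) / (h + 1), h = ps / pd, is the mean explicit
  opinion around a node of V1. In log-odds the first equation is affine:
    logit X (t+1) = b logit X t + logit m (Y t).
  The reduced map is order preserving, so once X and Y move in the same direction they keep doing
  so; otherwise their increments have opposite signs at every step, and the identity
    Y (t+2) - Y (t+1) = phi (X (t+2) - X (t+1)) + (1 - phi) k (Y (t+1) - Y t),  k = (h - 1) / (h + 1),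
  shows that this sign pattern never flips. Either way both sequences are eventually monotone,
  hence convergent, and their limits x_lim, y_lim solve the fixed-point equations. Eliminating
  y_lim gives (1 - b) logit x_lim = logit ((1 + c x_lim) / (2 + c)) with c = phi (h - 1), which is
  g (x_lim, b) = c; this has at most one root in (1/2, 1) by the mean value theorem.
  It remains to exclude x_lim = 1/2. An orbit tending to the centre would eventually decrease,
  and since logit (1/2 + p) ~ 4 p, the two decrease conditions force phi b k <= (1 - b) (1 - k)
  in the limit, which contradicts b > 2 / (phi (h - 1) + 2).
*)

section \<open>Log-odds\<close>

definition logit :: "real \<Rightarrow> real" where
  "logit z = ln z - ln (1 - z)"

lemma logit_half [simp]: "logit (1/2) = 0"
  by (simp add: logit_def)

lemma logit_strict_mono:
  assumes "0 < u" "u < v" "v < 1"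
  shows "logit u < logit v"
  using assms by (simp add: logit_def diff_strict_mono)

lemma logit_le_logit_iff:
  assumes "0 < u" "u < 1" "0 < v" "v < 1"
  shows "logit u \<le> logit v \<longleftrightarrow> u \<le> v"
  using logit_strict_mono[of u v] logit_strict_mono[of v u] assms
  by (cases u v rule: linorder_cases) auto

lemma logit_pos_iff:
  assumes "0 < u" "u < 1"
  shows "0 < logit u \<longleftrightarrow> 1/2 < u"
  using logit_le_logit_iff[of u "1/2"] assms by auto

lemma logit_eq_0_iff:
  assumes "0 < u" "u < 1"
  shows "logit u = 0 \<longleftrightarrow> u = 1/2"
  using logit_le_logit_iff[of u "1/2"] logit_le_logit_iff[of "1/2" u] assms by auto

lemma tendsto_logit [tendsto_intros]:
  assumes "(f \<longlongrightarrow> L) F" "0 < L" "L < 1"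
  shows "((\<lambda>t. logit (f t)) \<longlongrightarrow> logit L) F"
  unfolding logit_def using assms by (intro tendsto_intros) auto

lemma logit_le_imp_le_one_minus_exp:
  assumes "1/2 \<le> x" "x < 1" "logit x \<le> B"
  shows "x \<le> 1 - exp (- B) / 2"
proof -
  have "ln (1/2) \<le> ln x" using assms(1) by simp
  then have "ln (1/2) - B \<le> ln (1 - x)" using assms(3) unfolding logit_def by linarith
  then have "exp (ln (1/2) - B) \<le> 1 - x"
    using assms(2) by (metis diff_gt_0_iff_gt exp_le_cancel_iff exp_ln)
  then show ?thesis by (simp add: exp_diff exp_minus field_simps)
qed

lemma logit_derivative:
  assumes "0 < x" "x < 1"
  shows "(logit has_real_derivative 1 / x + 1 / (1 - x)) (at x)"
  unfolding logit_def[abs_def] using assms by (auto intro!: derivative_eq_intros)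

definition logit_ratio :: "real \<Rightarrow> real" where
  "logit_ratio p = logit (1/2 + p) / (4 * p)"

lemma logit_eq_logit_ratio: "p \<noteq> 0 \<Longrightarrow> logit (1/2 + p) = 4 * p * logit_ratio p"
  by (simp add: logit_ratio_def)

lemma logit_ratio_pos: "0 < p \<Longrightarrow> p < 1/2 \<Longrightarrow> 0 < logit_ratio p"
  using logit_pos_iff[of "1/2 + p"] by (simp add: logit_ratio_def)

lemma logit_ratio_tendsto_1:
  assumes "(f \<longlongrightarrow> 0) F" "eventually (\<lambda>t. 0 < f t) F"
  shows "((\<lambda>t. logit_ratio (f t)) \<longlongrightarrow> 1) F"
proof -
  have "(logit has_real_derivative 4) (at (1/2))"
    using logit_derivative[of "1/2"] by simp
  then have "((\<lambda>p. (logit (1/2 + p) - logit (1/2)) / p) \<longlongrightarrow> 4) (at 0)"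
    unfolding DERIV_def by simp
  then have "((\<lambda>p. (logit (1/2 + p) - logit (1/2)) / p / 4) \<longlongrightarrow> 4 / 4) (at 0)"
    by (intro tendsto_divide) auto
  then have "(logit_ratio \<longlongrightarrow> 1) (at 0)"
    unfolding logit_ratio_def[abs_def] by (simp add: field_simps)
  then have "(logit_ratio \<longlongrightarrow> 1) (at_right 0)"
    by (rule tendsto_mono[OF at_le, rotated]) simp
  moreover have "filterlim f (at_right 0) F"
    using assms by (rule tendsto_imp_filterlim_at_right)
  ultimately show ?thesis by (rule filterlim_compose)
qed

section \<open>The biased update and the mean neighbour opinion\<close>

definition biased_update :: "real \<Rightarrow> real \<Rightarrow> real \<Rightarrow> real" where
  "biased_update b x a = x powr b * a / (x powr b * a + (1 - x) powr b * (1 - a))"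

lemma biased_update_bounds:
  assumes "0 < x" "x < 1" "0 < a" "a < 1"
  shows "0 < biased_update b x a" "biased_update b x a < 1"
  using assms by (simp_all add: biased_update_def add_pos_pos)

lemma one_minus_biased_update:
  assumes "0 < x" "x < 1" "0 < a" "a < 1"
  shows "1 - biased_update b x a = (1 - x) powr b * (1 - a) / (x powr b * a + (1 - x) powr b * (1 - a))"
proof -
  have "0 < x powr b * a + (1 - x) powr b * (1 - a)" using assms by (simp add: add_pos_pos)
  then show ?thesis by (simp add: biased_update_def field_simps)
qed

lemma biased_update_swap:
  assumes "0 < x" "x < 1" "0 < a" "a < 1"
  shows "biased_update b (1 - x) (1 - a) = 1 - biased_update b x a"
  using one_minus_biased_update[OF assms] by (simp add: biased_update_def add.commute)

lemma logit_biased_update: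
  assumes "0 < x" "x < 1" "0 < a" "a < 1"
  shows "logit (biased_update b x a) = b * logit x + logit a"
proof -
  define D where "D = x powr b * a + (1 - x) powr b * (1 - a)"
  have "D > 0" unfolding D_def using assms by (simp add: add_pos_pos)
  have "logit (biased_update b x a) = ln (x powr b * a / D) - ln ((1 - x) powr b * (1 - a) / D)"
    using one_minus_biased_update[OF assms] by (simp add: logit_def biased_update_def D_def)
  also have "\<dots> = ln (x powr b) + ln a - ln ((1 - x) powr b) - ln (1 - a)"
    using assms \<open>D > 0\<close> by (simp add: ln_div ln_mult)
  also have "\<dots> = b * logit x + logit a"
    using assms by (simp add: logit_def ln_powr algebra_simps)
  finally show ?thesis .
qed

lemma biased_update_mono:
  assumes "0 < b" "0 < x1" "x1 \<le> x2" "x2 < 1" "0 < a1" "a1 \<le> a2" "a2 < 1"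
  shows "biased_update b x1 a1 \<le> biased_update b x2 a2"
proof -
  have "b * logit x1 + logit a1 \<le> b * logit x2 + logit a2"
    using assms logit_le_logit_iff[of x1 x2] logit_le_logit_iff[of a1 a2]
    by (intro add_mono mult_left_mono) auto
  then show ?thesis
    using assms logit_biased_update[of x1 a1 b] logit_biased_update[of x2 a2 b]
      biased_update_bounds[of x1 a1 b] biased_update_bounds[of x2 a2 b]
      logit_le_logit_iff[of "biased_update b x1 a1" "biased_update b x2 a2"]
    by simp
qed

lemma biased_update_scaled:
  assumes "d \<noteq> 0"
  shows "x powr b * (d * m) / (x powr b * (d * m) + (1 - x) powr b * (d - d * m))
    = biased_update b x m"
proof -
  have "x powr b * (d * m) + (1 - x) powr b * (d - d * m)
      = d * (x powr b * m + (1 - x) powr b * (1 - m))"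
    by (simp add: algebra_simps)
  then show ?thesis using assms by (simp add: biased_update_def)
qed

text \<open>The average explicit opinion around a node of \<open>V\<^sub>1\<close> when all of \<open>V\<^sub>1\<close> holds \<open>y\<close> and
  all of \<open>V\<^sub>2\<close> holds \<open>1 - y\<close>; here \<open>h = p\<^sub>s / p\<^sub>d\<close>.\<close>

definition mean_opinion :: "real \<Rightarrow> real \<Rightarrow> real" where
  "mean_opinion h y = (h * y + (1 - y)) / (h + 1)"

lemma mean_opinion_centered:
  "h + 1 \<noteq> 0 \<Longrightarrow> mean_opinion h y - 1/2 = (h - 1) / (h + 1) * (y - 1/2)"
  by (simp add: mean_opinion_def field_simps)

lemma mean_opinion_ratio:
  assumes "0 < p" "0 < q"
  shows "mean_opinion (p / q) y = (p * y + q * (1 - y)) / (p + q)"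
proof -
  have "mean_opinion (p / q) y = ((p / q) * y + (1 - y)) * q / ((p / q + 1) * q)"
    using assms by (simp add: mean_opinion_def)
  also have "\<dots> = (p * y + q * (1 - y)) / (p + q)"
    using assms by (simp add: algebra_simps)
  finally show ?thesis .
qed

lemma mean_opinion_mono:
  assumes "1 < h" "y1 \<le> y2"
  shows "mean_opinion h y1 \<le> mean_opinion h y2"
proof -
  have "h * y1 + (1 - y1) \<le> h * y2 + (1 - y2)"
    using assms mult_left_mono[of y1 y2 "h - 1"] by (simp add: algebra_simps)
  then show ?thesis using assms by (simp add: mean_opinion_def divide_right_mono)
qed

lemma mean_opinion_bounds:
  assumes "1 < h" "1/2 \<le> y" "y \<le> 1"
  shows "1/2 \<le> mean_opinion h y" "mean_opinion h y \<le> h / (h + 1)" "h / (h + 1) < 1"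
proof -
  show "1/2 \<le> mean_opinion h y"
  proof -
    have "mean_opinion h (1/2) = 1/2" using assms by (simp add: mean_opinion_def field_simps)
    then show ?thesis using assms mean_opinion_mono[of h "1/2" y] by simp
  qed
  show "mean_opinion h y \<le> h / (h + 1)"
    using assms mean_opinion_mono[of h y 1] by (simp add: mean_opinion_def)
  show "h / (h + 1) < 1" using assms by simp
qed

section \<open>Eventually monotone sequences\<close>

lemma mono_on_atLeastI:
  fixes f :: "nat \<Rightarrow> 'a::preorder"
  assumes "\<And>t. T \<le> t \<Longrightarrow> f t \<le> f (Suc t)"
  shows "mono_on {T..} f"
proof (rule mono_onI)
  fix r s :: nat assume "r \<in> {T..}" "r \<le> s"
  from \<open>r \<le> s\<close> show "f r \<le> f s"
  proof (induction s rule: dec_induct)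
    case (step s)
    then show ?case using assms[of s] \<open>r \<in> {T..}\<close> order_trans by auto
  qed simp
qed

lemma antimono_on_atLeastI:
  fixes f :: "nat \<Rightarrow> 'a::preorder"
  assumes "\<And>t. T \<le> t \<Longrightarrow> f (Suc t) \<le> f t"
  shows "antimono_on {T..} f"
proof (rule monotone_onI)
  fix r s :: nat assume "r \<in> {T..}" "r \<le> s"
  from \<open>r \<le> s\<close> show "f s \<le> f r"
  proof (induction s rule: dec_induct)
    case (step s)
    then show ?case using assms[of s] \<open>r \<in> {T..}\<close> order_trans by auto
  qed simp
qed

lemma convergent_if_eventually_monotone:
  fixes f :: "nat \<Rightarrow> real"
  assumes "mono_on {T..} f \<or> antimono_on {T..} f" "\<And>t. \<bar>f t\<bar> \<le> B"
  shows "convergent f"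
proof -
  have "Bseq (\<lambda>t. f (t + T))" using assms(2) by (intro BseqI') auto
  then show ?thesis
    using assms(1) Bseq_monoseq_convergent'_inc[of f T] Bseq_monoseq_convergent'_dec[of f T]
    by (auto simp: monotone_on_def)
qed

lemma mono_on_atLeast_le_lim:
  fixes f :: "nat \<Rightarrow> real"
  assumes "mono_on {T..} f" "f \<longlonglongrightarrow> L" "T \<le> r"
  shows "f r \<le> L"
  using assms(1,3) by (intro LIMSEQ_le_const[OF assms(2)] exI[of _ r]) (auto simp: monotone_on_def)

lemma order_preserving_step_persists:
  fixes X Y :: "nat \<Rightarrow> real"
  assumes order_preserving: "\<And>t s. X t \<le> X s \<Longrightarrow> Y t \<le> Y s \<Longrightarrow> X (Suc t) \<le> X (Suc s) \<and> Y (Suc t) \<le> Y (Suc s)"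
    and "T \<le> t"
  shows "(X T \<le> X (Suc T) \<and> Y T \<le> Y (Suc T) \<longrightarrow> X t \<le> X (Suc t) \<and> Y t \<le> Y (Suc t)) \<and>
    (X (Suc T) \<le> X T \<and> Y (Suc T) \<le> Y T \<longrightarrow> X (Suc t) \<le> X t \<and> Y (Suc t) \<le> Y t)"
  using assms(2) by (induction t rule: dec_induct) (use order_preserving in blast)+

lemma opposite_increments_persist:
  fixes X Y :: "nat \<Rightarrow> real"
  assumes increments: "\<And>t. Y (Suc (Suc t)) - Y (Suc t) = \<phi> * (X (Suc (Suc t)) - X (Suc t)) + \<kappa> * (Y (Suc t) - Y t)"
    and "0 < \<phi>" "0 < \<kappa>"
    and opposite: "\<And>t. (X t < X (Suc t) \<and> Y (Suc t) < Y t) \<or> (X (Suc t) < X t \<and> Y t < Y (Suc t))"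
  shows "X t < X (Suc t) \<and> Y (Suc t) < Y t \<longleftrightarrow> X 0 < X 1 \<and> Y 1 < Y 0"
proof -
  have no_flip_down: False
    if "X t < X (Suc t)" "Y (Suc t) < Y t" "X (Suc (Suc t)) < X (Suc t)" "Y (Suc t) < Y (Suc (Suc t))"
    for t
  proof -
    have "\<phi> * (X (Suc (Suc t)) - X (Suc t)) < 0" "\<kappa> * (Y (Suc t) - Y t) < 0"
      using that assms(2,3) by (simp_all add: mult_pos_neg)
    then show False using increments[of t] that by linarith
  qed
  have no_flip_up: False
    if "X (Suc t) < X t" "Y t < Y (Suc t)" "X (Suc t) < X (Suc (Suc t))" "Y (Suc (Suc t)) < Y (Suc t)"
    for t
  proof -
    have "0 < \<phi> * (X (Suc (Suc t)) - X (Suc t))" "0 < \<kappa> * (Y (Suc t) - Y t)"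
      using that assms(2,3) by simp_all
    then show False using increments[of t] that by linarith
  qed
  have "X t < X (Suc t) \<and> Y (Suc t) < Y t \<longleftrightarrow>
      X (Suc t) < X (Suc (Suc t)) \<and> Y (Suc (Suc t)) < Y (Suc t)" for t
    using opposite[of t] opposite[of "Suc t"] no_flip_down[of t] no_flip_up[of t] by blast
  then show ?thesis by (induction t) auto
qed

lemma eventually_monotone_pair:
  fixes X Y :: "nat \<Rightarrow> real"
  assumes order_preserving: "\<And>t s. X t \<le> X s \<Longrightarrow> Y t \<le> Y s \<Longrightarrow> X (Suc t) \<le> X (Suc s) \<and> Y (Suc t) \<le> Y (Suc s)"
    and increments: "\<And>t. Y (Suc (Suc t)) - Y (Suc t) = \<phi> * (X (Suc (Suc t)) - X (Suc t)) + \<kappa> * (Y (Suc t) - Y t)"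
    and "0 < \<phi>" "0 < \<kappa>"
  shows "\<exists>T. (mono_on {T..} X \<or> antimono_on {T..} X) \<and> (mono_on {T..} Y \<or> antimono_on {T..} Y)"
proof (cases "\<exists>T. (X T \<le> X (Suc T) \<and> Y T \<le> Y (Suc T)) \<or> (X (Suc T) \<le> X T \<and> Y (Suc T) \<le> Y T)")
  case True
  then obtain T where "(X T \<le> X (Suc T) \<and> Y T \<le> Y (Suc T)) \<or> (X (Suc T) \<le> X T \<and> Y (Suc T) \<le> Y T)"
    by blast
  then have "(mono_on {T..} X \<and> mono_on {T..} Y) \<or> (antimono_on {T..} X \<and> antimono_on {T..} Y)"
    using order_preserving_step_persists[of X Y T, OF order_preserving]
    by (blast intro: mono_on_atLeastI antimono_on_atLeastI)
  then show ?thesis by blast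
next
  case False
  then have opposite: "(X t < X (Suc t) \<and> Y (Suc t) < Y t) \<or> (X (Suc t) < X t \<and> Y t < Y (Suc t))" for t
    by (auto simp: not_le)
  note pattern = opposite_increments_persist[of Y \<phi> X \<kappa>, OF increments assms(3,4) opposite]
  show ?thesis
  proof (cases "X 0 < X 1 \<and> Y 1 < Y 0")
    case True
    then have steps: "X t < X (Suc t) \<and> Y (Suc t) < Y t" for t using pattern[of t] by blast
    have "mono_on {0..} X" using steps by (intro mono_on_atLeastI) (simp add: less_imp_le)
    moreover have "antimono_on {0..} Y" using steps by (intro antimono_on_atLeastI) (simp add: less_imp_le)
    ultimately show ?thesis by blast
  next
    case False
    then have steps: "X (Suc t) < X t \<and> Y t < Y (Suc t)" for t using pattern[of t] opposite[of t] by blast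
    have "antimono_on {0..} X" using steps by (intro antimono_on_atLeastI) (simp add: less_imp_le)
    moreover have "mono_on {0..} Y" using steps by (intro mono_on_atLeastI) (simp add: less_imp_le)
    ultimately show ?thesis by blast
  qed
qed

section \<open>The fixed-point equation\<close>

text \<open>\<open>fixpoint_defect c \<beta> x = logit ((1 + c x) / (2 + c)) - \<beta> logit x\<close>, with the first logit
  written out so that it can be differentiated termwise.\<close>

definition fixpoint_defect :: "real \<Rightarrow> real \<Rightarrow> real \<Rightarrow> real" where
  "fixpoint_defect c \<beta> x = ln (1 + c * x) - ln (1 + c * (1 - x)) - \<beta> * logit x"

lemma fixpoint_defect_derivative:
  assumes "0 < c" "0 < x" "x < 1"
  shows "(fixpoint_defect c \<beta> has_real_derivative
     c / (1 + c * x) + c / (1 + c * (1 - x)) - \<beta> / x - \<beta> / (1 - x)) (at x)"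
proof -
  have "0 < 1 + c * x" "0 < 1 + c * (1 - x)" using assms by (simp_all add: add_pos_pos)
  then have "((\<lambda>x. ln (1 + c * x)) has_real_derivative c / (1 + c * x)) (at x)"
    "((\<lambda>x. ln (1 + c * (1 - x))) has_real_derivative - c / (1 + c * (1 - x))) (at x)"
    by (auto intro!: derivative_eq_intros)
  then have "(fixpoint_defect c \<beta> has_real_derivative
      c / (1 + c * x) - - c / (1 + c * (1 - x)) - \<beta> * (1 / x + 1 / (1 - x))) (at x)"
    unfolding fixpoint_defect_def[abs_def] using assms
    by (intro DERIV_diff DERIV_cmult logit_derivative)
  then show ?thesis by (simp add: algebra_simps)
qed

lemma fixpoint_defect_critical_point:
  fixes c x \<beta> :: real
  assumes "0 < c" "0 < x" "x < 1"
    and "c / (1 + c * x) + c / (1 + c * (1 - x)) - \<beta> / x - \<beta> / (1 - x) = 0"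
  shows "x * (1 - x) * (c * (2 + c) - \<beta> * c\<^sup>2) = \<beta> * (1 + c)"
proof -
  have "0 < c * x" using assms(1,2) by simp
  moreover have "0 < c * (1 - x)" using assms(1,3) by simp
  ultimately have pos: "0 < 1 + c * x" "0 < 1 + c * (1 - x)" by linarith+
  have "c / (1 + c * x) + c / (1 + c * (1 - x)) = c * (2 + c) / ((1 + c * x) * (1 + c * (1 - x)))"
    using pos by (simp add: field_simps)
  moreover have "\<beta> / x + \<beta> / (1 - x) = \<beta> / (x * (1 - x))"
    using assms by (simp add: field_simps)
  ultimately have "c * (2 + c) / ((1 + c * x) * (1 + c * (1 - x))) = \<beta> / (x * (1 - x))"
    using assms(4) by (simp add: algebra_simps)
  then have "c * (2 + c) * (x * (1 - x)) = \<beta> * ((1 + c * x) * (1 + c * (1 - x)))"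
    using pos assms by (simp add: frac_eq_eq)
  then show ?thesis by (simp add: algebra_simps power2_eq_square)
qed

text \<open>Together with the trivial zero at \<open>1/2\<close>, two zeros in \<open>(1/2, 1)\<close> would give, by the mean
  value theorem, two critical points there; but \<open>x (1 - x)\<close> is injective on \<open>(1/2, 1)\<close>.\<close>

lemma fixpoint_defect_zero_unique:
  assumes "0 < c" "0 < \<beta>"
    and "1/2 < x1" "x1 < 1" "fixpoint_defect c \<beta> x1 = 0"
    and "1/2 < x2" "x2 < 1" "fixpoint_defect c \<beta> x2 = 0"
  shows "x1 = x2"
proof -
  define D' where "D' x = c / (1 + c * x) + c / (1 + c * (1 - x)) - \<beta> / x - \<beta> / (1 - x)" for x
  define K where "K = c * (2 + c) - \<beta> * c\<^sup>2"
  have critical: "z * (1 - z) * K = \<beta> * (1 + c)" if "D' z = 0" "0 < z" "z < 1" for z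
    using fixpoint_defect_critical_point[of c z \<beta>] that assms(1) unfolding D'_def K_def by simp
  have critical_between: "\<exists>z. u < z \<and> z < v \<and> D' z = 0"
    if uv: "0 < u" "u < v" "v < 1" and zeros: "fixpoint_defect c \<beta> u = 0" "fixpoint_defect c \<beta> v = 0"
    for u v
  proof -
    obtain z where "u < z" "z < v"
      "fixpoint_defect c \<beta> v - fixpoint_defect c \<beta> u = (v - u) * D' z"
      using MVT2[of u v "fixpoint_defect c \<beta>" D'] uv assms(1) fixpoint_defect_derivative
      unfolding D'_def by force
    then show ?thesis using uv zeros by auto
  qed
  have False if uv: "1/2 < u" "u < v" "v < 1"
    and zeros: "fixpoint_defect c \<beta> u = 0" "fixpoint_defect c \<beta> v = 0" for u v
  proof -
    have "fixpoint_defect c \<beta> (1/2) = 0" by (simp add: fixpoint_defect_def)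
    then obtain z1 z2 where z: "1/2 < z1" "z1 < u" "D' z1 = 0" "u < z2" "z2 < v" "D' z2 = 0"
      using critical_between[of "1/2" u] critical_between[of u v] uv zeros by auto
    then have "z1 * (1 - z1) * K = z2 * (1 - z2) * K"
      using critical[of z1] critical[of z2] uv by simp
    then have "(z2 - z1) * (z2 + z1 - 1) * K = 0" by (simp add: algebra_simps)
    moreover have "(z2 - z1) * (z2 + z1 - 1) \<noteq> 0" using z by simp
    ultimately have "K = 0" by simp
    then show False using critical[of z1] z uv assms(1,2) by simp
  qed
  then show ?thesis using assms by (cases x1 x2 rule: linorder_cases) auto
qed

lemma g_fun_eq_iff_fixpoint_defect:
  assumes "0 < b" "b < 1" "1/2 < x" "x < 1" "0 < c"
  shows "g_fun x b = c \<longleftrightarrow> fixpoint_defect c (1 - b) x = 0"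
proof -
  have pos: "0 < x" "0 < 1 - x" using assms by auto
  have "x = x powr b * x powr (1 - b)" "1 - x = (1 - x) powr b * (1 - x) powr (1 - b)"
    using pos by (simp_all add: powr_add[symmetric])
  then have "x * (1 - x) powr (1 - b) - (1 - x) * x powr (1 - b)
      = (x powr b - (1 - x) powr b) * (x powr (1 - b) * (1 - x) powr (1 - b))"
    by (metis (no_types, lifting) mult.commute mult.left_commute right_diff_distrib')
  moreover have "(1 - x) powr b < x powr b" using assms by (intro powr_less_mono2) auto
  ultimately have denominator: "0 < x * (1 - x) powr (1 - b) - (1 - x) * x powr (1 - b)"
    using pos by simp
  have "0 < 1 + c * x" "0 < 1 + c * (1 - x)" using assms pos by (simp_all add: add_pos_pos)
  have "g_fun x b = c \<longleftrightarrow>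
      x powr (1 - b) - (1 - x) powr (1 - b) = c * (x * (1 - x) powr (1 - b) - (1 - x) * x powr (1 - b))"
    using assms(3) denominator by (simp add: g_fun_def divide_eq_eq)
  also have "\<dots> \<longleftrightarrow> x powr (1 - b) * (1 + c * (1 - x)) = (1 - x) powr (1 - b) * (1 + c * x)"
    by (simp add: algebra_simps)
  also have "\<dots> \<longleftrightarrow> ln (x powr (1 - b) * (1 + c * (1 - x))) = ln ((1 - x) powr (1 - b) * (1 + c * x))"
    using pos \<open>0 < 1 + c * x\<close> \<open>0 < 1 + c * (1 - x)\<close> by simp
  also have "\<dots> \<longleftrightarrow> (1 - b) * ln x + ln (1 + c * (1 - x)) = (1 - b) * ln (1 - x) + ln (1 + c * x)"
    using pos \<open>0 < 1 + c * x\<close> \<open>0 < 1 + c * (1 - x)\<close> by (simp add: ln_mult ln_powr)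
  also have "\<dots> \<longleftrightarrow> fixpoint_defect c (1 - b) x = 0"
    by (auto simp: fixpoint_defect_def logit_def algebra_simps)
  finally show ?thesis .
qed

lemma x_hat_eqI:
  assumes "0 < b" "b < 1" "0 < \<phi> * (h - 1)" "1/2 < x" "x < 1" "g_fun x b = \<phi> * (h - 1)"
  shows "x_hat \<phi> h b = x"
  unfolding x_hat_def
proof (rule the_equality)
  show "1/2 < x \<and> x < 1 \<and> g_fun x b = \<phi> * (h - 1)" using assms by simp
next
  fix x' assume "1/2 < x' \<and> x' < 1 \<and> g_fun x' b = \<phi> * (h - 1)"
  then show "x' = x"
    using assms g_fun_eq_iff_fixpoint_defect[of b x' "\<phi> * (h - 1)"]
      g_fun_eq_iff_fixpoint_defect[of b x "\<phi> * (h - 1)"]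
      fixpoint_defect_zero_unique[of "\<phi> * (h - 1)" "1 - b" x' x]
    by auto
qed

section \<open>The reduced two-dimensional dynamics\<close>

text \<open>The algebraic core of the linearisation at the centre: \<open>u = logit (X t) / 4\<close>, \<open>q = Y t - 1/2\<close>,
  \<open>p' = X (t + 1) - 1/2\<close>, and \<open>R\<close>, \<open>S\<close> are the values of \<open>logit_ratio\<close> at \<open>p'\<close> and \<open>k q\<close>.\<close>

lemma linearized_decrease_inequality:
  fixes u q p' R S k \<phi> b :: real
  assumes "0 < u" "0 < q" "0 < R" "0 < S" "0 < k" "0 < \<phi>" "0 < b"
    and logit_step: "p' * R = b * u + k * q * S"
    and x_decrease: "k * q * S \<le> (1 - b) * u"
    and y_decrease: "\<phi> * p' + (1 - \<phi>) * (k * q) \<le> q"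
  shows "\<phi> * b * k * S \<le> (1 - b) * ((1 - k + \<phi> * k) * R - \<phi> * k * S)"
proof -
  define B where "B = (1 - k + \<phi> * k) * R - \<phi> * k * S"
  have "\<phi> * k * S * (b * u + k * q * S) = \<phi> * k * S * (p' * R)"
    using logit_step by simp
  also have "\<dots> = \<phi> * p' * (k * S * R)"
    by (simp add: algebra_simps)
  also have "\<dots> \<le> (1 - k + \<phi> * k) * q * (k * S * R)"
    using y_decrease assms(3-5) by (intro mult_right_mono) (auto simp: algebra_simps)
  also have "\<dots> = k * q * S * B + \<phi> * k * S * (k * q * S)"
    by (simp add: B_def algebra_simps)
  finally have "\<phi> * b * k * S * u \<le> k * q * S * B"
    by (simp add: algebra_simps)
  moreover have "0 < \<phi> * b * k * S * u" using assms by simp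
  ultimately have "0 < k * q * S * B" by linarith
  moreover have "0 < k * q * S" using assms by simp
  ultimately have "0 < B" by (rule zero_less_mult_pos)
  then have "k * q * S * B \<le> (1 - b) * u * B" using x_decrease by (simp add: mult_right_mono)
  with \<open>\<phi> * b * k * S * u \<le> k * q * S * B\<close> have "(\<phi> * b * k * S) * u \<le> ((1 - b) * B) * u"
    by (simp add: algebra_simps)
  then show ?thesis using assms(1) by (simp add: B_def)
qed

locale island_orbit =
  fixes h \<phi> b :: real and X Y :: "nat \<Rightarrow> real"
  assumes homophily: "1 < h"
    and resilience: "0 < \<phi>" "\<phi> < 1"
    and bias: "2 / (\<phi> * (h - 1) + 2) < b" "b < 1"
    and init: "1/2 < X 0" "X 0 < 1" "1/2 \<le> Y 0" "Y 0 \<le> 1"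
    and step_X: "\<And>t. X (Suc t) = biased_update b (X t) (mean_opinion h (Y t))"
    and step_Y: "\<And>t. Y (Suc t) = \<phi> * X (Suc t) + (1 - \<phi>) * mean_opinion h (Y t)"
begin

abbreviation a :: "nat \<Rightarrow> real" where
  "a t \<equiv> mean_opinion h (Y t)"

definition k :: real where
  "k = (h - 1) / (h + 1)"

lemma k_bounds: "0 < k" "k < 1"
  using homophily by (simp_all add: k_def)

lemma mean_opinion_minus_half: "mean_opinion h y - 1/2 = k * (y - 1/2)"
  using mean_opinion_centered[of h y] homophily by (simp add: k_def)

lemma b_pos: "0 < b"
proof -
  have "0 < \<phi> * (h - 1)" using homophily resilience by simp
  then have "0 < 2 / (\<phi> * (h - 1) + 2)" by simp
  then show ?thesis using bias(1) by linarith
qed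

lemma bias_k: "(1 - b) * (1 - k) < \<phi> * b * k"
proof -
  have "0 < \<phi> * (h - 1) + 2" using homophily resilience by (simp add: add_pos_pos)
  then have "2 * (1 - b) < \<phi> * b * (h - 1)"
    using bias(1) by (simp add: divide_less_eq algebra_simps)
  then have "2 * (1 - b) / (h + 1) < \<phi> * b * (h - 1) / (h + 1)"
    using homophily by (simp add: divide_strict_right_mono)
  moreover have "1 - k = 2 / (h + 1)" using homophily by (simp add: k_def field_simps)
  then have "(1 - b) * (1 - k) = 2 * (1 - b) / (h + 1)" by simp
  moreover have "\<phi> * b * k = \<phi> * b * (h - 1) / (h + 1)" by (simp add: k_def)
  ultimately show ?thesis by simp
qed

lemma orbit_bounds: "1/2 < X t \<and> X t < 1 \<and> 1/2 \<le> Y t \<and> Y t \<le> 1"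
proof (induction t)
  case 0
  then show ?case using init by simp
next
  case (Suc t)
  then have a: "1/2 \<le> a t" "a t < 1"
    using mean_opinion_bounds[OF homophily, of "Y t"] by auto
  then have "logit (X (Suc t)) = b * logit (X t) + logit (a t)"
    using Suc.IH step_X logit_biased_update[of "X t" "a t" b] by simp
  moreover have "0 < logit (X t)" using Suc.IH logit_pos_iff by simp
  moreover have "0 \<le> logit (a t)" using a logit_le_logit_iff[of "1/2" "a t"] by simp
  moreover have "0 < X (Suc t)" "X (Suc t) < 1"
    using Suc.IH a step_X biased_update_bounds[of "X t" "a t" b] by auto
  ultimately have X: "1/2 < X (Suc t)" "X (Suc t) < 1"
    using b_pos logit_pos_iff[of "X (Suc t)"] by (auto intro: add_pos_nonneg)
  have "\<phi> * (1/2) + (1 - \<phi>) * (1/2) \<le> Y (Suc t)" "Y (Suc t) \<le> \<phi> * 1 + (1 - \<phi>) * 1"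
    unfolding step_Y using X a resilience by (intro add_mono mult_left_mono; simp)+
  then have "1/2 \<le> Y (Suc t)" "Y (Suc t) \<le> 1" by (auto simp: field_simps)
  then show ?case using X by simp
qed

lemma X_bounds: "0 < X t" "X t < 1"
  using orbit_bounds[of t] by auto

lemma a_bounds: "1/2 \<le> a t" "a t \<le> h / (h + 1)" "0 < a t" "a t < 1"
  using mean_opinion_bounds[OF homophily, of "Y t"] orbit_bounds[of t] by auto

lemma Y_Suc_gt_half: "1/2 < Y (Suc t)"
proof -
  have "\<phi> * (1/2) + (1 - \<phi>) * (1/2) < Y (Suc t)"
    unfolding step_Y using orbit_bounds[of "Suc t"] a_bounds(1)[of t] resilience
    by (intro add_less_le_mono mult_left_mono; simp)
  then show ?thesis by (simp add: field_simps)
qed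

lemma k_Y_minus_half_bounds:
  assumes "0 < t"
  shows "0 < k * (Y t - 1/2)" "k * (Y t - 1/2) < 1/2"
proof -
  have "0 < Y t - 1/2" "Y t - 1/2 \<le> 1/2"
    using Y_Suc_gt_half[of "t - 1"] orbit_bounds[of t] assms by simp_all
  moreover have "k * (Y t - 1/2) < Y t - 1/2" using k_bounds calculation(1) by simp
  ultimately show "0 < k * (Y t - 1/2)" "k * (Y t - 1/2) < 1/2" using k_bounds by (simp, linarith)
qed

lemma Y_Suc_minus_half: "Y (Suc t) - 1/2 = \<phi> * (X (Suc t) - 1/2) + (1 - \<phi>) * (k * (Y t - 1/2))"
proof -
  have "a t = 1/2 + k * (Y t - 1/2)" using mean_opinion_minus_half[of "Y t"] by linarith
  with step_Y[of t] show ?thesis by algebra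
qed

lemma logit_X_Suc: "logit (X (Suc t)) = b * logit (X t) + logit (a t)"
  using step_X logit_biased_update[OF X_bounds a_bounds(3,4)] by simp

lemma step_mono:
  assumes "X t \<le> X s" "Y t \<le> Y s"
  shows "X (Suc t) \<le> X (Suc s) \<and> Y (Suc t) \<le> Y (Suc s)"
proof -
  have "a t \<le> a s" using mean_opinion_mono[OF homophily assms(2)] .
  then have "X (Suc t) \<le> X (Suc s)"
    unfolding step_X using assms b_pos X_bounds a_bounds by (intro biased_update_mono) auto
  moreover have "Y (Suc t) \<le> Y (Suc s)"
    unfolding step_Y using calculation \<open>a t \<le> a s\<close> resilience
    by (intro add_mono mult_left_mono) (auto simp flip: step_X)
  ultimately show ?thesis ..
qed

lemma Y_increment:
  "Y (Suc (Suc t)) - Y (Suc t) = \<phi> * (X (Suc (Suc t)) - X (Suc t)) + ((1 - \<phi>) * k) * (Y (Suc t) - Y t)"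
proof -
  have convex_step: "y' - y = \<phi> * (x' - x) + (1 - \<phi>) * (m' - m)"
    if "y' = \<phi> * x' + (1 - \<phi>) * m'" "y = \<phi> * x + (1 - \<phi>) * m" for y' y x' x m' m :: real
    using that by (simp add: algebra_simps)
  have "a (Suc t) - a t = k * (Y (Suc t) - Y t)"
    using mean_opinion_minus_half[of "Y t"] mean_opinion_minus_half[of "Y (Suc t)"] by (simp add: algebra_simps)
  then show ?thesis
    using convex_step[OF step_Y[of "Suc t"] step_Y[of t]] by simp
qed

lemma eventually_monotone:
  "\<exists>T. (mono_on {T..} X \<or> antimono_on {T..} X) \<and> (mono_on {T..} Y \<or> antimono_on {T..} Y)"
  using k_bounds resilience
  by (intro eventually_monotone_pair[of X Y \<phi> "(1 - \<phi>) * k"] step_mono Y_increment) auto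

lemma X_le_uniform: "\<exists>\<theta> < 1. \<forall>t. X t \<le> \<theta>"
proof -
  define M where "M = logit (h / (h + 1))"
  define B where "B = max (logit (X 0)) (M / (1 - b))"
  have a_le: "logit (a t) \<le> M" for t
    unfolding M_def using a_bounds[of t] homophily
    by (subst logit_le_logit_iff) (auto intro: less_le_trans[of 0 "1/2"])
  have "M = (1 - b) * (M / (1 - b))" using bias(2) by simp
  also have "\<dots> \<le> (1 - b) * B" unfolding B_def using bias(2) by (intro mult_left_mono) auto
  finally have M_le: "M \<le> (1 - b) * B" .
  have "logit (X t) \<le> B" for t
  proof (induction t)
    case 0
    then show ?case by (simp add: B_def)
  next
    case (Suc t)
    have "b * logit (X t) \<le> b * B" using Suc.IH b_pos by (simp add: mult_left_mono)
    then show ?case using logit_X_Suc[of t] a_le[of t] M_le by (simp add: algebra_simps)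
  qed
  then have "X t \<le> 1 - exp (- B) / 2" for t
    using orbit_bounds[of t] by (intro logit_le_imp_le_one_minus_exp) auto
  moreover have "1 - exp (- B) / 2 < 1" by simp
  ultimately show ?thesis by blast
qed

lemma convergent_X: "convergent X" and convergent_Y: "convergent Y"
proof -
  obtain T where "mono_on {T..} X \<or> antimono_on {T..} X" "mono_on {T..} Y \<or> antimono_on {T..} Y"
    using eventually_monotone by blast
  moreover have "\<bar>X t\<bar> \<le> 1" "\<bar>Y t\<bar> \<le> 1" for t using orbit_bounds[of t] by auto
  ultimately show "convergent X" "convergent Y"
    by (auto intro: convergent_if_eventually_monotone)
qed

definition x_lim :: real where "x_lim = lim X"
definition y_lim :: real where "y_lim = lim Y"

lemma X_tendsto: "X \<longlonglongrightarrow> x_lim"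
  using convergent_X by (simp add: x_lim_def convergent_LIMSEQ_iff)

lemma Y_tendsto: "Y \<longlonglongrightarrow> y_lim"
  using convergent_Y by (simp add: y_lim_def convergent_LIMSEQ_iff)

lemma x_lim_bounds: "1/2 \<le> x_lim" "x_lim < 1"
proof -
  show "1/2 \<le> x_lim"
    using orbit_bounds by (intro LIMSEQ_le_const[OF X_tendsto]) (auto intro: less_imp_le)
  obtain \<theta> where "\<theta> < 1" "\<And>t. X t \<le> \<theta>" using X_le_uniform by blast
  then show "x_lim < 1"
    using LIMSEQ_le_const2[OF X_tendsto, of \<theta>] by auto
qed

lemma y_lim_bounds: "1/2 \<le> y_lim" "y_lim \<le> 1"
  using orbit_bounds LIMSEQ_le_const[OF Y_tendsto, of "1/2"] LIMSEQ_le_const2[OF Y_tendsto, of 1]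
  by auto

lemma mean_at_lim_bounds: "0 < mean_opinion h y_lim" "mean_opinion h y_lim < 1"
  using mean_opinion_bounds[OF homophily y_lim_bounds] by auto

lemma a_tendsto: "a \<longlonglongrightarrow> mean_opinion h y_lim"
  unfolding mean_opinion_def by (intro tendsto_intros Y_tendsto) (use homophily in simp)

lemma x_lim_fixpoint: "(1 - b) * logit x_lim = logit (mean_opinion h y_lim)"
proof -
  have "(\<lambda>t. logit (X (Suc t))) \<longlonglongrightarrow> b * logit x_lim + logit (mean_opinion h y_lim)"
    unfolding logit_X_Suc using x_lim_bounds mean_at_lim_bounds
    by (intro tendsto_intros X_tendsto a_tendsto) auto
  moreover have "(\<lambda>t. logit (X (Suc t))) \<longlonglongrightarrow> logit x_lim"
    using x_lim_bounds by (intro tendsto_intros LIMSEQ_Suc[OF X_tendsto]) auto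
  ultimately have "logit x_lim = b * logit x_lim + logit (mean_opinion h y_lim)"
    using LIMSEQ_unique by blast
  then show ?thesis by (simp add: algebra_simps)
qed

lemma y_lim_fixpoint: "y_lim = \<phi> * x_lim + (1 - \<phi>) * mean_opinion h y_lim"
proof -
  have "(\<lambda>t. Y (Suc t)) \<longlonglongrightarrow> \<phi> * x_lim + (1 - \<phi>) * mean_opinion h y_lim"
    unfolding step_Y by (intro tendsto_intros LIMSEQ_Suc[OF X_tendsto] a_tendsto)
  then show ?thesis using LIMSEQ_unique LIMSEQ_Suc[OF Y_tendsto] by blast
qed

lemma eventually_decreasing_at_centre:
  assumes "x_lim = 1/2"
  shows "y_lim = 1/2" "\<exists>T. antimono_on {T..} X \<and> antimono_on {T..} Y"
proof -
  have "logit (mean_opinion h y_lim) = 0" using x_lim_fixpoint assms by simp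
  then have "mean_opinion h y_lim = 1/2" using logit_eq_0_iff mean_at_lim_bounds by blast
  then have "k * (y_lim - 1/2) = 0" using mean_opinion_minus_half[of y_lim] by linarith
  then show "y_lim = 1/2" using k_bounds by simp
  obtain T where T: "mono_on {T..} X \<or> antimono_on {T..} X" "mono_on {T..} Y \<or> antimono_on {T..} Y"
    using eventually_monotone by blast
  have "\<not> mono_on {T..} X"
    using mono_on_atLeast_le_lim[OF _ X_tendsto, of T T] orbit_bounds[of T] assms by auto
  moreover have "\<not> mono_on {T..} Y"
    using mono_on_atLeast_le_lim[OF _ Y_tendsto, of T "Suc T"] Y_Suc_gt_half[of T] \<open>y_lim = 1/2\<close>
    by auto
  ultimately show "\<exists>T. antimono_on {T..} X \<and> antimono_on {T..} Y" using T by blast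
qed

lemma decreasing_step_inequality:
  assumes "0 < t" "X (Suc t) \<le> X t" "Y (Suc t) \<le> Y t"
  shows "\<phi> * b * k * logit_ratio (k * (Y t - 1/2))
    \<le> (1 - b) * ((1 - k + \<phi> * k) * logit_ratio (X (Suc t) - 1/2) - \<phi> * k * logit_ratio (k * (Y t - 1/2)))"
proof -
  define p' where "p' = X (Suc t) - 1/2"
  define q where "q = Y t - 1/2"
  define u where "u = logit (X t) / 4"
  define R where "R = logit_ratio p'"
  define S where "S = logit_ratio (k * q)"
  have kq: "0 < k * q" "k * q < 1/2" using k_Y_minus_half_bounds[OF assms(1)] by (simp_all add: q_def)
  then have "0 < q" using k_bounds by (simp add: zero_less_mult_iff)
  have p': "0 < p'" "p' < 1/2" using orbit_bounds[of "Suc t"] by (simp_all add: p'_def)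
  have "0 < u" using orbit_bounds[of t] logit_pos_iff[OF X_bounds] by (simp add: u_def)
  have "0 < R" "0 < S" using p' kq logit_ratio_pos by (simp_all add: R_def S_def)
  have "a t = 1/2 + k * q" using mean_opinion_minus_half[of "Y t"] unfolding q_def by linarith
  moreover have "k * q \<noteq> 0" using kq(1) by linarith
  ultimately have logit_a: "logit (a t) = 4 * (k * q * S)"
    using logit_eq_logit_ratio[of "k * q"] by (simp add: S_def mult.assoc)
  have logit_X: "logit (X (Suc t)) = 4 * (p' * R)"
    using logit_eq_logit_ratio[of p'] p' by (simp add: p'_def R_def)
  have "p' * R = b * u + k * q * S"
    using logit_X_Suc[of t] logit_a logit_X by (simp add: u_def)
  moreover have "k * q * S \<le> (1 - b) * u"
  proof -
    have "logit (X (Suc t)) \<le> logit (X t)"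
      using assms(2) logit_le_logit_iff[OF X_bounds X_bounds] by blast
    then have "b * logit (X t) + 4 * (k * q * S) \<le> logit (X t)"
      using logit_X_Suc[of t] logit_a by simp
    then show ?thesis by (simp add: u_def algebra_simps)
  qed
  moreover have "\<phi> * p' + (1 - \<phi>) * (k * q) \<le> q"
    using Y_Suc_minus_half[of t] assms(3) by (simp add: p'_def q_def)
  ultimately have "\<phi> * b * k * S \<le> (1 - b) * ((1 - k + \<phi> * k) * R - \<phi> * k * S)"
    using linearized_decrease_inequality \<open>0 < u\<close> \<open>0 < q\<close> \<open>0 < R\<close> \<open>0 < S\<close>
      k_bounds(1) resilience(1) b_pos
    by blast
  then show ?thesis by (simp add: R_def S_def p'_def q_def)
qed

lemma x_lim_gt_half: "1/2 < x_lim"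
proof (rule ccontr)
  assume "\<not> 1/2 < x_lim"
  then have centre: "x_lim = 1/2" using x_lim_bounds by simp
  then obtain T where T: "antimono_on {T..} X" "antimono_on {T..} Y"
    using eventually_decreasing_at_centre by blast
  define R where "R t = logit_ratio (X (Suc t) - 1/2)" for t
  define S where "S t = logit_ratio (k * (Y t - 1/2))" for t
  have "(\<lambda>t. X (Suc t) - 1/2) \<longlonglongrightarrow> 0"
    using tendsto_diff[OF LIMSEQ_Suc[OF X_tendsto] tendsto_const[of "1/2"]] centre by simp
  then have "R \<longlonglongrightarrow> 1"
    unfolding R_def using orbit_bounds by (intro logit_ratio_tendsto_1) auto
  have "(\<lambda>t. k * (Y t - 1/2)) \<longlonglongrightarrow> 0"
    using tendsto_mult[OF tendsto_const[of k] tendsto_diff[OF Y_tendsto tendsto_const[of "1/2"]]]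
      eventually_decreasing_at_centre(1)[OF centre] by simp
  moreover have "eventually (\<lambda>t. 0 < k * (Y t - 1/2)) sequentially"
    using k_Y_minus_half_bounds(1) by (intro eventually_sequentiallyI[of 1]) simp
  ultimately have "S \<longlonglongrightarrow> 1"
    unfolding S_def by (rule logit_ratio_tendsto_1)
  have "(\<lambda>t. (1 - b) * ((1 - k + \<phi> * k) * R t - \<phi> * k * S t) - \<phi> * b * k * S t)
      \<longlonglongrightarrow> (1 - b) * ((1 - k + \<phi> * k) * 1 - \<phi> * k * 1) - \<phi> * b * k * 1"
    by (intro tendsto_intros \<open>R \<longlonglongrightarrow> 1\<close> \<open>S \<longlonglongrightarrow> 1\<close>)
  moreover have "\<forall>t\<ge>Suc T. 0 \<le> (1 - b) * ((1 - k + \<phi> * k) * R t - \<phi> * k * S t) - \<phi> * b * k * S t"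
    using decreasing_step_inequality T by (simp add: R_def S_def monotone_on_def)
  ultimately have "0 \<le> (1 - b) * ((1 - k + \<phi> * k) * 1 - \<phi> * k * 1) - \<phi> * b * k * 1"
    using LIMSEQ_le_const by blast
  then show False using bias_k by (simp add: algebra_simps)
qed

lemma mean_at_lim: "mean_opinion h y_lim = (1 + \<phi> * (h - 1) * x_lim) / (2 + \<phi> * (h - 1))"
proof -
  define A where "A = mean_opinion h y_lim"
  have "A * (h + 1) = (h - 1) * y_lim + 1"
    using homophily by (simp add: A_def mean_opinion_def field_simps)
  moreover have "y_lim = \<phi> * x_lim + (1 - \<phi>) * A"
    using y_lim_fixpoint by (simp add: A_def)
  ultimately have "A * (2 + \<phi> * (h - 1)) = 1 + \<phi> * (h - 1) * x_lim"
    by algebra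
  moreover have "0 < 2 + \<phi> * (h - 1)" using homophily resilience by (simp add: add_pos_pos)
  ultimately show ?thesis by (simp add: A_def eq_divide_eq)
qed

lemma x_hat_eq_x_lim: "x_hat \<phi> h b = x_lim"
proof (rule x_hat_eqI)
  define c where "c = \<phi> * (h - 1)"
  have c: "0 < c" using homophily resilience by (simp add: c_def)
  have pos: "0 < 1 + c * x_lim" "0 < 1 + c * (1 - x_lim)"
    using c x_lim_bounds by (simp_all add: add_pos_pos)
  have "1 - mean_opinion h y_lim = (1 + c * (1 - x_lim)) / (2 + c)"
    using mean_at_lim c by (simp add: c_def field_simps)
  then have "logit (mean_opinion h y_lim) = ln (1 + c * x_lim) - ln (1 + c * (1 - x_lim))"
    using mean_at_lim pos c by (simp add: logit_def c_def ln_div)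
  then have "fixpoint_defect c (1 - b) x_lim = 0"
    using x_lim_fixpoint by (simp add: fixpoint_defect_def)
  then show "g_fun x_lim b = \<phi> * (h - 1)"
    using g_fun_eq_iff_fixpoint_defect[of b x_lim c] b_pos bias(2) x_lim_gt_half x_lim_bounds c
    by (simp add: c_def)
qed (use b_pos bias(2) homophily resilience x_lim_gt_half x_lim_bounds in auto)

lemma y_lim_eq: "y_lim = (\<phi> * (h + 1) * x_lim + 1 - \<phi>) / (\<phi> * h + 2 - \<phi>)"
proof -
  define A where "A = mean_opinion h y_lim"
  have "0 < 2 + \<phi> * (h - 1)" using homophily resilience by (simp add: add_pos_pos)
  then have "A * (2 + \<phi> * (h - 1)) = 1 + \<phi> * (h - 1) * x_lim"
    using mean_at_lim by (simp add: A_def divide_eq_eq)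
  moreover have "y_lim = \<phi> * x_lim + (1 - \<phi>) * A"
    using y_lim_fixpoint by (simp add: A_def)
  ultimately have "y_lim * (\<phi> * h + 2 - \<phi>) = \<phi> * (h + 1) * x_lim + 1 - \<phi>"
    by algebra
  moreover have "\<phi> < \<phi> * h" using homophily resilience by simp
  then have "0 < \<phi> * h + 2 - \<phi>" by linarith
  ultimately show ?thesis by (simp add: eq_divide_eq)
qed

end

section \<open>Reduction of the network dynamics\<close>

lemma two_island_sum_nbrs:
  fixes f :: "'a \<Rightarrow> real"
  assumes G: "two_island E V1 V2 n ps pd" and "\<forall>j\<in>V1. f j = \<alpha>" "\<forall>j\<in>V2. f j = \<beta>"
  shows "i \<in> V1 \<Longrightarrow> (\<Sum>j\<in>nbrs E (V1 \<union> V2) i. f j) = real n * ps * \<alpha> + real n * pd * \<beta>"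
    and "i \<in> V2 \<Longrightarrow> (\<Sum>j\<in>nbrs E (V1 \<union> V2) i. f j) = real n * pd * \<alpha> + real n * ps * \<beta>"
proof -
  have "nbrs E (V1 \<union> V2) i = nbrs E V1 i \<union> nbrs E V2 i" by (auto simp: nbrs_def)
  moreover have "finite (nbrs E V1 i)" "finite (nbrs E V2 i)" "nbrs E V1 i \<inter> nbrs E V2 i = {}"
    using G by (auto simp: two_island_def nbrs_def)
  ultimately have "(\<Sum>j\<in>nbrs E (V1 \<union> V2) i. f j) = (\<Sum>j\<in>nbrs E V1 i. f j) + (\<Sum>j\<in>nbrs E V2 i. f j)"
    by (simp add: sum.union_disjoint)
  also have "\<dots> = real (card (nbrs E V1 i)) * \<alpha> + real (card (nbrs E V2 i)) * \<beta>"
    using assms(2,3) by (simp add: nbrs_def)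
  finally show "i \<in> V1 \<Longrightarrow> (\<Sum>j\<in>nbrs E (V1 \<union> V2) i. f j) = real n * ps * \<alpha> + real n * pd * \<beta>"
    and "i \<in> V2 \<Longrightarrow> (\<Sum>j\<in>nbrs E (V1 \<union> V2) i. f j) = real n * pd * \<alpha> + real n * ps * \<beta>"
    using G by (auto simp: two_island_def)
qed

lemma two_island_degree:
  assumes "two_island E V1 V2 n ps pd" "i \<in> V1 \<union> V2"
  shows "real (card (nbrs E (V1 \<union> V2) i)) = real n * (ps + pd)"
  using two_island_sum_nbrs[OF assms(1), of "\<lambda>_. 1" 1 1 i] assms(2) by (auto simp: algebra_simps)

lemma dual_opinion_step:
  assumes "dual_opinion_dynamics E V b \<phi> x y" "i \<in> V"
    and "real (card (nbrs E V i)) = d" "d \<noteq> 0" "(\<Sum>j\<in>nbrs E V i. y t j) = d * m"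
  shows "x (Suc t) i = biased_update b (x t i) m \<and> y (Suc t) i = \<phi> * biased_update b (x t i) m + (1 - \<phi>) * m"
  using assms biased_update_scaled[of d "x t i" b m]
  unfolding dual_opinion_dynamics_def Let_def by auto

context island_orbit
begin

lemma two_island_orbit:
  assumes G: "two_island E V1 V2 n ps pd" and h: "h = ps / pd"
    and init1: "\<forall>i\<in>V1. x 0 i = X 0 \<and> y 0 i = Y 0"
    and init2: "\<forall>j\<in>V2. x 0 j = 1 - X 0 \<and> y 0 j = 1 - Y 0"
    and dyn: "dual_opinion_dynamics E (V1 \<union> V2) b \<phi> x y"
  shows "(\<forall>i\<in>V1. x t i = X t \<and> y t i = Y t) \<and> (\<forall>j\<in>V2. x t j = 1 - X t \<and> y t j = 1 - Y t)"
proof (induction t)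
  case 0
  then show ?case using init1 init2 by simp
next
  case (Suc t)
  from G have "1 \<le> n" "0 < pd" "pd < ps" by (auto simp: two_island_def)
  define d where "d = real n * (ps + pd)"
  have "0 < d" using \<open>1 \<le> n\<close> \<open>0 < pd\<close> \<open>pd < ps\<close> by (simp add: d_def)
  have "ps + pd \<noteq> 0" using \<open>0 < pd\<close> \<open>pd < ps\<close> by simp
  then have "d * a t = real n * (ps * Y t + pd * (1 - Y t))"
    using \<open>0 < pd\<close> \<open>pd < ps\<close> by (simp add: d_def h mean_opinion_ratio)
  then have d_mean: "d * a t = real n * ps * Y t + real n * pd * (1 - Y t)"
    by (simp add: algebra_simps)
  have degree: "real (card (nbrs E (V1 \<union> V2) i)) = d" if "i \<in> V1 \<union> V2" for i
    using two_island_degree[OF G that] by (simp add: d_def)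
  have "x (Suc t) i = X (Suc t) \<and> y (Suc t) i = Y (Suc t)" if "i \<in> V1" for i
  proof -
    have "(\<Sum>j\<in>nbrs E (V1 \<union> V2) i. y t j) = d * a t"
      using two_island_sum_nbrs(1)[OF G, of "y t" "Y t" "1 - Y t" i] Suc.IH that d_mean by simp
    then show ?thesis
      using dual_opinion_step[OF dyn _ degree] Suc.IH that \<open>0 < d\<close> step_X step_Y by simp
  qed
  moreover have "x (Suc t) j = 1 - X (Suc t) \<and> y (Suc t) j = 1 - Y (Suc t)" if "j \<in> V2" for j
  proof -
    have "(\<Sum>i\<in>nbrs E (V1 \<union> V2) j. y t i) = d * (1 - a t)"
      using two_island_sum_nbrs(2)[OF G, of "y t" "Y t" "1 - Y t" j] Suc.IH that d_mean
      by (simp add: d_def algebra_simps)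
    then have "x (Suc t) j = biased_update b (1 - X t) (1 - a t) \<and>
        y (Suc t) j = \<phi> * biased_update b (1 - X t) (1 - a t) + (1 - \<phi>) * (1 - a t)"
      using dual_opinion_step[OF dyn _ degree] Suc.IH that \<open>0 < d\<close> by auto
    moreover have "biased_update b (1 - X t) (1 - a t) = 1 - X (Suc t)"
      using biased_update_swap[OF X_bounds a_bounds(3,4)] step_X by simp
    ultimately show ?thesis using step_Y[of t] by (simp add: algebra_simps)
  qed
  ultimately show ?case by blast
qed

end

theorem theorem3:
  fixes E :: "'a \<Rightarrow> 'a \<Rightarrow> bool" and V1 V2 :: "'a set" and n :: nat
    and ps pd \<phi> b x0 y0 :: real and x y :: "nat \<Rightarrow> 'a \<Rightarrow> real"
  assumes G: "two_island E V1 V2 n ps pd"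
    and phi: "0 < \<phi>" "\<phi> < 1"
    and b: "2 / (\<phi> * (ps / pd - 1) + 2) < b" "b < 1"
    and x0: "1/2 < x0" "x0 < 1"
    and y0: "1/2 \<le> y0" "y0 \<le> x0"
    and init1: "\<forall>i\<in>V1. x 0 i = x0 \<and> y 0 i = y0"
    and init2: "\<forall>j\<in>V2. x 0 j = 1 - x0 \<and> y 0 j = 1 - y0"
    and dyn: "dual_opinion_dynamics E (V1 \<union> V2) b \<phi> x y"
  shows "\<forall>i\<in>V1.
     (\<exists>\<tau>::nat. \<tau> > 0 \<and>
        (mono_on {t. t > \<tau>} (\<lambda>t. x t i) \<or> antimono_on {t. t > \<tau>} (\<lambda>t. x t i)) \<and>
        (mono_on {t. t > \<tau>} (\<lambda>t. y t i) \<or> antimono_on {t. t > \<tau>} (\<lambda>t. y t i))) \<and>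
     (\<lambda>t. x t i) \<longlonglongrightarrow> x_hat \<phi> (ps / pd) b \<and>
     (\<lambda>t. y t i) \<longlonglongrightarrow>
        (\<phi> * (ps / pd + 1) * x_hat \<phi> (ps / pd) b + 1 - \<phi>) / (\<phi> * (ps / pd) + 2 - \<phi>)"
proof -
  have "0 < pd" "pd < ps" using G by (auto simp: two_island_def)
  define F where "F p = (let x' = biased_update b (fst p) (mean_opinion (ps / pd) (snd p))
    in (x', \<phi> * x' + (1 - \<phi>) * mean_opinion (ps / pd) (snd p)))" for p
  define X where "X t = fst ((F ^^ t) (x0, y0))" for t
  define Y where "Y t = snd ((F ^^ t) (x0, y0))" for t
  interpret island_orbit "ps / pd" \<phi> b X Y
    using \<open>0 < pd\<close> \<open>pd < ps\<close> phi b x0 y0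
    by unfold_locales (simp_all add: X_def Y_def F_def Let_def)
  have reduced: "\<forall>i\<in>V1. x t i = X t \<and> y t i = Y t" for t
    using two_island_orbit[OF G refl] init1 init2 dyn by (simp add: X_def Y_def)
  obtain T where T: "mono_on {T..} X \<or> antimono_on {T..} X" "mono_on {T..} Y \<or> antimono_on {T..} Y"
    using eventually_monotone by blast
  have "{t. t > Suc T} \<subseteq> {T..}" by auto
  then have "mono_on {t. t > Suc T} X \<or> antimono_on {t. t > Suc T} X"
    "mono_on {t. t > Suc T} Y \<or> antimono_on {t. t > Suc T} Y"
    using T by (meson monotone_on_subset)+
  then show ?thesis
    using reduced X_tendsto Y_tendsto x_hat_eq_x_lim y_lim_eq
    by (intro ballI conjI exI[of _ "Suc T"]) auto
qed

end
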